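(* Let $P$ be a finite point set in $\mathbb{S}^1$ containing a source $s$, with $|P|>2$, and let $\rho_{\mathrm{opt}}$ be an optimal range assignment for $P$. Then there exists a point $r\in\mathbb{S}^1$ such that $r\notin\mathrm{cov}(\rho_{\mathrm{opt}},P)$.
   Context: $\mathbb{S}^1$ is a circle with distance measured along the circle: $d(p,q)=\min(d_{\mathrm{cw}}(p,q),d_{\mathrm{ccw}}(p,q))$, where $d_{\mathrm{cw}},d_{\mathrm{ccw}}$ are clockwise and counterclockwise arc lengths. A range assignment $\rho$ gives each $p\in P$ a range $\rho(p)\ge0$, inducing a directed graph with edge $(p,q)$ iff $d(p,q)\le\rho(p)$; it is feasible if this graph contains an arborescence rooted at $s$ spanning $P$; its cost is $\sum_{p\in P}\rho(p)^\alpha$ for a fixed constant $\alpha>1$; an optimal assignment is a feasible one of minimum cost. The covered region $\mathrm{cov}(\rho,P)$ is the set of all $r\in\mathbb{S}^1$ such that there is $p\in P$ with $\rho(p)\ge d(p,r)$. *)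

theory Defs
  imports Complex_Main
begin

text \<open>The circle S^1 of circumference L > 0 is modelled as the interval [0, L)
  (reals modulo L).  Distance is the shorter of the two arc lengths.\<close>

definition circle :: "real \<Rightarrow> real set" where
  "circle L = {0..<L}"

definition circ_dist :: "real \<Rightarrow> real \<Rightarrow> real \<Rightarrow> real" where
  "circ_dist L p q = min \<bar>p - q\<bar> (L - \<bar>p - q\<bar>)"

definition induced_graph :: "real \<Rightarrow> (real \<Rightarrow> real) \<Rightarrow> real set \<Rightarrow> (real \<times> real) set" where
  "induced_graph L \<rho> P = {(p, q). p \<in> P \<and> q \<in> P \<and> p \<noteq> q \<and> circ_dist L p q \<le> \<rho> p}"

definition has_spanning_arborescence :: "('a \<times> 'a) set \<Rightarrow> 'a \<Rightarrow> 'a set \<Rightarrow> bool" where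
  "has_spanning_arborescence E s P \<longleftrightarrow>
     (\<exists>T. T \<subseteq> E \<and> T \<subseteq> P \<times> P \<and>
        (\<forall>q. (q, s) \<notin> T) \<and>
        (\<forall>p \<in> P - {s}. \<exists>!q. (q, p) \<in> T) \<and>
        (\<forall>p \<in> P. (s, p) \<in> T\<^sup>*))"

definition range_assignment :: "real set \<Rightarrow> (real \<Rightarrow> real) \<Rightarrow> bool" where
  "range_assignment P \<rho> \<longleftrightarrow> (\<forall>p \<in> P. \<rho> p \<ge> 0)"

definition feasible :: "real \<Rightarrow> real set \<Rightarrow> real \<Rightarrow> (real \<Rightarrow> real) \<Rightarrow> bool" where
  "feasible L P s \<rho> \<longleftrightarrow> range_assignment P \<rho> \<and> has_spanning_arborescence (induced_graph L \<rho> P) s P"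

definition cost :: "real \<Rightarrow> real set \<Rightarrow> (real \<Rightarrow> real) \<Rightarrow> real" where
  "cost \<alpha> P \<rho> = (\<Sum>p \<in> P. \<rho> p powr \<alpha>)"

definition optimal :: "real \<Rightarrow> real \<Rightarrow> real set \<Rightarrow> real \<Rightarrow> (real \<Rightarrow> real) \<Rightarrow> bool" where
  "optimal L \<alpha> P s \<rho> \<longleftrightarrow> feasible L P s \<rho> \<and>
     (\<forall>\<rho>'. feasible L P s \<rho>' \<longrightarrow> cost \<alpha> P \<rho> \<le> cost \<alpha> P \<rho>')"

definition cov :: "real \<Rightarrow> (real \<Rightarrow> real) \<Rightarrow> real set \<Rightarrow> real set" where
  "cov L \<rho> P = {r \<in> circle L. \<exists>p \<in> P. \<rho> p \<ge> circ_dist L p r}"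

end

theory Submission
  imports Defs
begin

(* For a point p of positive range, shrink_range cuts its range down to the farthest point
   strictly inside it.  By optimality the shrunk assignment is infeasible, so some point f at
   distance exactly rho p from p is no longer reached from s.  Choose p so that the shrunk
   assignment reaches as many points as possible: then every unreached point, f in particular,
   has range 0, and every other q satisfies rho q < d(q, f).  If rho p < L/2, the points just
   beyond f as seen from p are uncovered.  If rho p = L/2, f is the antipode of p and all other
   points are reached without the edge p -> f; letting the point q farthest from p in P - {f}
   cover f instead is strictly cheaper, since D^alpha + (L/2 - D)^alpha < (L/2)^alpha. *)

lemma sum_powr_less_powr_add:
  fixes a b \<alpha> :: real
  assumes "0 < a" "0 < b" "1 < \<alpha>"
  shows "a powr \<alpha> + b powr \<alpha> < (a + b) powr \<alpha>"
proof -
  have "a powr \<alpha> + b powr \<alpha> = a * a powr (\<alpha> - 1) + b * b powr (\<alpha> - 1)"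
    using assms by (simp add: powr_mult_base)
  also have "\<dots> < a * (a + b) powr (\<alpha> - 1) + b * (a + b) powr (\<alpha> - 1)"
    using assms by (intro add_strict_mono mult_strict_left_mono powr_less_mono2) auto
  also have "\<dots> = (a + b) powr \<alpha>"
    using assms by (simp add: powr_mult_base distrib_right[symmetric])
  finally show ?thesis .
qed

lemma powr_add_max_less:
  fixes d c r \<alpha> :: real
  assumes "0 < d" "d < c" "0 \<le> r" "1 < \<alpha>"
  shows "d powr \<alpha> + max r (c - d) powr \<alpha> < c powr \<alpha> + r powr \<alpha>"
proof (cases "c - d \<le> r")
  case True
  have "d powr \<alpha> < c powr \<alpha>"
    using assms by (intro powr_less_mono2) auto
  with True show ?thesis by simp
next
  case False
  have "d powr \<alpha> + (c - d) powr \<alpha> < c powr \<alpha>"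
    using sum_powr_less_powr_add[of d "c - d" \<alpha>] assms by simp
  moreover have "max r (c - d) = c - d" using False by simp
  ultimately show ?thesis using powr_ge_zero[of r \<alpha>] by linarith
qed

lemma ex_greatest_image_if_finite:
  fixes f :: "'a \<Rightarrow> 'b :: linorder"
  assumes "finite S" "S \<noteq> {}"
  shows "\<exists>x\<in>S. \<forall>y\<in>S. f y \<le> f x"
proof -
  have "Max (f ` S) \<in> f ` S" using assms by simp
  then obtain x where "x \<in> S" "f x = Max (f ` S)" by (metis imageE)
  with assms show ?thesis by (metis Max_ge finite_imageI image_eqI)
qed

lemma circ_dist_commute: "circ_dist L x y = circ_dist L y x"
  by (simp add: circ_dist_def abs_minus_commute)

lemma circ_dist_self: "0 < L \<Longrightarrow> circ_dist L x x = 0"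
  by (simp add: circ_dist_def)

lemma circ_dist_pos:
  "x \<in> circle L \<Longrightarrow> y \<in> circle L \<Longrightarrow> x \<noteq> y \<Longrightarrow> 0 < circ_dist L x y"
  by (auto simp: circ_dist_def circle_def)

lemma circ_dist_le_half: "circ_dist L x y \<le> L / 2"
  by (simp add: circ_dist_def min_def)

lemma circ_dist_triangle:
  "x \<in> circle L \<Longrightarrow> y \<in> circle L \<Longrightarrow> z \<in> circle L \<Longrightarrow>
    circ_dist L x z \<le> circ_dist L x y + circ_dist L y z"
  unfolding circ_dist_def circle_def by (auto simp: abs_if min_def)

lemma circ_dist_half_unique:
  "x \<in> circle L \<Longrightarrow> y \<in> circle L \<Longrightarrow> z \<in> circle L \<Longrightarrow>
    circ_dist L x y = L / 2 \<Longrightarrow> circ_dist L x z = L / 2 \<Longrightarrow> y = z"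
  unfolding circ_dist_def circle_def by (auto simp: abs_if min_def split: if_splits)

lemma circ_dist_to_antipode:
  "x \<in> circle L \<Longrightarrow> y \<in> circle L \<Longrightarrow> z \<in> circle L \<Longrightarrow>
    circ_dist L x y = L / 2 \<Longrightarrow> circ_dist L z y = L / 2 - circ_dist L x z"
  unfolding circ_dist_def circle_def by (auto simp: abs_if min_def split: if_splits)

lemma ex_circ_dist_beyond:
  assumes "p \<in> circle L" "f \<in> circle L" "0 < circ_dist L p f" "circ_dist L p f < L / 2"
    and "0 < \<eta>" "\<eta> < L / 2 - circ_dist L p f"
  shows "\<exists>x \<in> circle L. circ_dist L f x \<le> \<eta> \<and> circ_dist L p f < circ_dist L p x"
proof -
  have "p < f \<and> f - p < L / 2 \<or> p < f \<and> L / 2 < f - p \<or>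
        f < p \<and> p - f < L / 2 \<or> f < p \<and> L / 2 < p - f"
    using assms unfolding circ_dist_def circle_def by (auto simp: abs_if min_def split: if_splits)
  then show ?thesis
  proof (elim disjE)
    assume "p < f \<and> f - p < L / 2"
    then show ?thesis
    proof (cases "f + \<eta> < L")
      case True
      with \<open>p < f \<and> f - p < L / 2\<close> assms show ?thesis
        by (intro bexI[of _ "f + \<eta>"]) (auto simp: circ_dist_def circle_def abs_if min_def)
    next
      case False
      with \<open>p < f \<and> f - p < L / 2\<close> assms show ?thesis
        by (intro bexI[of _ "f + \<eta> - L"]) (auto simp: circ_dist_def circle_def abs_if min_def)
    qed
  next
    assume "p < f \<and> L / 2 < f - p"
    with assms show ?thesis
      by (intro bexI[of _ "f - \<eta>"]) (auto simp: circ_dist_def circle_def abs_if min_def)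
  next
    assume "f < p \<and> p - f < L / 2"
    then show ?thesis
    proof (cases "0 \<le> f - \<eta>")
      case True
      with \<open>f < p \<and> p - f < L / 2\<close> assms show ?thesis
        by (intro bexI[of _ "f - \<eta>"]) (auto simp: circ_dist_def circle_def abs_if min_def)
    next
      case False
      with \<open>f < p \<and> p - f < L / 2\<close> assms show ?thesis
        by (intro bexI[of _ "f - \<eta> + L"]) (auto simp: circ_dist_def circle_def abs_if min_def)
    qed
  next
    assume "f < p \<and> L / 2 < p - f"
    with assms show ?thesis
      by (intro bexI[of _ "f + \<eta>"]) (auto simp: circ_dist_def circle_def abs_if min_def)
  qed
qed

lemma has_spanning_arborescence_iff_reachable:
  assumes "E \<subseteq> P \<times> P"
  shows "has_spanning_arborescence E s P \<longleftrightarrow> P \<subseteq> E\<^sup>* `` {s}"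
proof
  assume "has_spanning_arborescence E s P"
  then obtain T where "T \<subseteq> E" "\<forall>p\<in>P. (s, p) \<in> T\<^sup>*"
    unfolding has_spanning_arborescence_def by blast
  then show "P \<subseteq> E\<^sup>* `` {s}"
    using rtrancl_mono by blast
next
  assume reach: "P \<subseteq> E\<^sup>* `` {s}"
  define depth where "depth y = (LEAST n. (s, y) \<in> E ^^ n)" for y
  have depth_path: "(s, y) \<in> E ^^ depth y" if "y \<in> P" for y
    using reach that unfolding depth_def by (metis Image_singleton_iff LeastI rtrancl_power subsetD)
  have depth_le: "depth y \<le> n" if "(s, y) \<in> E ^^ n" for y n
    unfolding depth_def using that by (rule Least_le)
  define parent where "parent y = (SOME z. (s, z) \<in> E ^^ (depth y - 1) \<and> (z, y) \<in> E)" for y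
  have parent: "(parent y, y) \<in> E \<and> depth (parent y) < depth y" if "y \<in> P" "y \<noteq> s" for y
  proof -
    have path: "(s, y) \<in> E ^^ depth y" using depth_path \<open>y \<in> P\<close> .
    with \<open>y \<noteq> s\<close> obtain m where m: "depth y = Suc m"
      by (cases "depth y") auto
    with path have "\<exists>z. (s, z) \<in> E ^^ (depth y - 1) \<and> (z, y) \<in> E"
      by (auto elim: relpow_Suc_E)
    then have "(s, parent y) \<in> E ^^ (depth y - 1) \<and> (parent y, y) \<in> E"
      unfolding parent_def by (rule someI_ex)
    with m depth_le show ?thesis by fastforce
  qed
  define T where "T = {(parent y, y) | y. y \<in> P - {s}}"
  have "(s, y) \<in> T\<^sup>*" if "y \<in> P" for y
    using that
  proof (induction "depth y" arbitrary: y rule: less_induct)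
    case less
    show ?case
    proof (cases "y = s")
      case False
      with less.prems parent have "(parent y, y) \<in> E" "depth (parent y) < depth y"
        by auto
      moreover from this(1) assms have "parent y \<in> P" by auto
      moreover from less.prems False have "(parent y, y) \<in> T" unfolding T_def by auto
      ultimately show ?thesis using less.hyps by (meson rtrancl.rtrancl_into_rtrancl)
    qed simp
  qed
  moreover have "T \<subseteq> E" unfolding T_def using parent by auto
  moreover from this assms have "T \<subseteq> P \<times> P" by auto
  moreover have "\<forall>q. (q, s) \<notin> T" "\<forall>p \<in> P - {s}. \<exists>!q. (q, p) \<in> T"
    unfolding T_def by auto
  ultimately show "has_spanning_arborescence E s P"
    unfolding has_spanning_arborescence_def by blast
qed

lemma induced_graph_subset: "induced_graph L \<rho> P \<subseteq> P \<times> P"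
  unfolding induced_graph_def by auto

definition reach :: "real \<Rightarrow> (real \<Rightarrow> real) \<Rightarrow> real set \<Rightarrow> real \<Rightarrow> real set" where
  "reach L \<rho> P s = (induced_graph L \<rho> P)\<^sup>* `` {s}"

lemma source_in_reach [simp]: "s \<in> reach L \<rho> P s"
  unfolding reach_def by simp

lemma reach_closed:
  "x \<in> reach L \<rho> P s \<Longrightarrow> (x, y) \<in> induced_graph L \<rho> P \<Longrightarrow> y \<in> reach L \<rho> P s"
  unfolding reach_def by (auto intro: rtrancl_into_rtrancl)

lemma reach_subset: "s \<in> P \<Longrightarrow> reach L \<rho> P s \<subseteq> P"
  unfolding reach_def by (auto elim: rtrancl_induct simp: induced_graph_def)

lemma reach_mono:
  assumes "\<forall>x \<in> reach L \<rho> P s. \<rho> x \<le> \<rho>' x"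
  shows "reach L \<rho> P s \<subseteq> reach L \<rho>' P s"
proof
  fix y assume "y \<in> reach L \<rho> P s"
  then have "(s, y) \<in> (induced_graph L \<rho> P)\<^sup>*" unfolding reach_def by simp
  then show "y \<in> reach L \<rho>' P s"
  proof (induction rule: rtrancl_induct)
    case (step x y)
    then have "x \<in> reach L \<rho> P s" unfolding reach_def by simp
    with assms step.hyps(2) have "(x, y) \<in> induced_graph L \<rho>' P"
      unfolding induced_graph_def by fastforce
    with step.IH show ?case by (rule reach_closed)
  qed simp
qed

lemma feasible_iff_reach:
  "feasible L P s \<rho> \<longleftrightarrow> range_assignment P \<rho> \<and> P \<subseteq> reach L \<rho> P s"
  unfolding feasible_def reach_def
  by (simp add: has_spanning_arborescence_iff_reachable[OF induced_graph_subset])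

lemma feasible_subset_if_closed:
  assumes "feasible L P s \<rho>" "s \<in> S" "induced_graph L \<rho> P `` S \<subseteq> S"
  shows "P \<subseteq> S"
proof -
  have "P \<subseteq> reach L \<rho> P s" using assms(1) by (simp add: feasible_iff_reach)
  also have "\<dots> \<subseteq> (induced_graph L \<rho> P)\<^sup>* `` S" unfolding reach_def using assms(2) by blast
  also have "\<dots> = S" using assms(3) by (rule Image_closed_trancl)
  finally show ?thesis .
qed

definition shrink_range :: "real \<Rightarrow> real set \<Rightarrow> (real \<Rightarrow> real) \<Rightarrow> real \<Rightarrow> real \<Rightarrow> real" where
  "shrink_range L P \<rho> p =
     \<rho>(p := Max (insert 0 {circ_dist L p y | y. y \<in> P \<and> circ_dist L p y < \<rho> p}))"

lemma shrink_range_other [simp]: "x \<noteq> p \<Longrightarrow> shrink_range L P \<rho> p x = \<rho> x"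
  by (simp add: shrink_range_def)

lemma shrink_range_nonneg: "finite P \<Longrightarrow> 0 \<le> shrink_range L P \<rho> p p"
  by (simp add: shrink_range_def)

lemma shrink_range_less: "finite P \<Longrightarrow> 0 < \<rho> p \<Longrightarrow> shrink_range L P \<rho> p p < \<rho> p"
  by (auto simp: shrink_range_def Max_less_iff)

lemma shrink_range_le: "finite P \<Longrightarrow> 0 \<le> \<rho> x \<Longrightarrow> shrink_range L P \<rho> p x \<le> \<rho> x"
  by (cases "x = p") (auto simp: shrink_range_def Max_le_iff)

lemma dist_le_shrink_range:
  "finite P \<Longrightarrow> y \<in> P \<Longrightarrow> circ_dist L p y < \<rho> p \<Longrightarrow> circ_dist L p y \<le> shrink_range L P \<rho> p p"
  by (auto simp: shrink_range_def intro!: Max_ge)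

lemma shrink_range_le_bound:
  assumes "finite P" "0 \<le> D" "\<And>y. y \<in> P \<Longrightarrow> circ_dist L p y < \<rho> p \<Longrightarrow> circ_dist L p y \<le> D"
  shows "shrink_range L P \<rho> p p \<le> D"
  using assms by (auto simp: shrink_range_def Max_le_iff)

lemma range_assignment_shrink_range:
  "finite P \<Longrightarrow> range_assignment P \<rho> \<Longrightarrow> range_assignment P (shrink_range L P \<rho> p)"
  unfolding range_assignment_def by (metis shrink_range_nonneg shrink_range_other)

lemma edge_lost_by_shrink_range:
  assumes "finite P" "(x, y) \<in> induced_graph L \<rho> P"
    and "(x, y) \<notin> induced_graph L (shrink_range L P \<rho> p) P"
  shows "x = p \<and> circ_dist L p y = \<rho> p"
proof -
  have "x = p"
    using assms(2,3) by (cases "x = p") (auto simp: induced_graph_def)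
  moreover have "\<not> circ_dist L p y < \<rho> p"
    using assms dist_le_shrink_range[OF assms(1)] \<open>x = p\<close> by (auto simp: induced_graph_def)
  ultimately show ?thesis
    using assms(2) by (auto simp: induced_graph_def)
qed

lemma cost_less_if_less_on:
  assumes "finite P" "A \<subseteq> P" "\<forall>x \<in> P - A. g x = h x"
    and "(\<Sum>x\<in>A. g x powr \<alpha>) < (\<Sum>x\<in>A. h x powr \<alpha>)"
  shows "cost \<alpha> P g < cost \<alpha> P h"
proof -
  have "(\<Sum>x \<in> P - A. g x powr \<alpha>) = (\<Sum>x \<in> P - A. h x powr \<alpha>)"
    using assms(3) by simp
  with assms show ?thesis
    unfolding cost_def by (simp add: sum.subset_diff[OF assms(2,1)])
qed

lemma ex_not_in_cov_beyond:
  assumes "finite P" "P \<subseteq> circle L" "p \<in> P" "f \<in> P"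
    and "0 < \<rho> p" "\<rho> p < L / 2" "circ_dist L p f = \<rho> p" "\<rho> f = 0"
    and "\<forall>q \<in> P - {p, f}. \<rho> q < circ_dist L q f"
  shows "\<exists>x \<in> circle L. x \<notin> cov L \<rho> P"
proof -
  define \<delta> where "\<delta> = Min (insert (L / 2 - \<rho> p) ((\<lambda>q. circ_dist L q f - \<rho> q) ` (P - {p, f})))"
  have \<delta>_pos: "0 < \<delta>" and \<delta>_le: "\<delta> \<le> L / 2 - \<rho> p"
    and \<delta>_gap: "\<And>q. q \<in> P - {p, f} \<Longrightarrow> \<delta> \<le> circ_dist L q f - \<rho> q"
    using assms unfolding \<delta>_def by (auto simp: Min_gr_iff)
  have "p \<in> circle L" "f \<in> circle L" using assms by auto
  with assms \<delta>_pos \<delta>_le obtain x where x: "x \<in> circle L" "circ_dist L f x \<le> \<delta> / 2"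
    "\<rho> p < circ_dist L p x"
    using ex_circ_dist_beyond[of p L f "\<delta> / 2"] by auto
  have "\<rho> q < circ_dist L q x" if "q \<in> P" for q
  proof -
    consider "q = p" | "q = f" | "q \<in> P - {p, f}" using \<open>q \<in> P\<close> by blast
    then show ?thesis
    proof cases
      case 2
      with x(3) assms(7) have "x \<noteq> q" by auto
      with 2 assms x(1) \<open>f \<in> circle L\<close> show ?thesis by (simp add: circ_dist_pos)
    next
      case 3
      with assms(2) x(1) \<open>f \<in> circle L\<close>
      have "circ_dist L q f \<le> circ_dist L q x + circ_dist L f x"
        using circ_dist_triangle[of q L x f] circ_dist_commute[of L x f] by auto
      with 3 x(2) \<delta>_pos \<delta>_gap show ?thesis by fastforce
    qed (use x(3) in simp)
  qed
  with x(1) show ?thesis unfolding cov_def by (auto simp: not_le)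
qed

locale optimal_range_assignment =
  fixes L \<alpha> s :: real and P :: "real set" and \<rho> :: "real \<Rightarrow> real"
  assumes L_pos: "0 < L" and alpha_gt_one: "1 < \<alpha>" and finite_P: "finite P"
    and P_subset_circle: "P \<subseteq> circle L" and source_in_P: "s \<in> P"
    and optimal: "optimal L \<alpha> P s \<rho>"
begin

abbreviation shrunk_reach :: "real \<Rightarrow> real set" where
  "shrunk_reach p \<equiv> reach L (shrink_range L P \<rho> p) P s"

lemma feasible: "feasible L P s \<rho>"
  using optimal by (simp add: optimal_def)

lemma cost_le_feasible: "feasible L P s \<rho>' \<Longrightarrow> cost \<alpha> P \<rho> \<le> cost \<alpha> P \<rho>'"
  using optimal by (simp add: optimal_def)

lemma range_nonneg: "x \<in> P \<Longrightarrow> 0 \<le> \<rho> x"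
  using feasible by (simp add: feasible_def range_assignment_def)

lemma shrunk_reach_subset: "shrunk_reach p \<subseteq> P"
  using reach_subset[OF source_in_P] .

lemma shrunk_reach_incomplete:
  assumes "p \<in> P" "0 < \<rho> p"
  shows "\<not> P \<subseteq> shrunk_reach p"
proof
  assume "P \<subseteq> shrunk_reach p"
  then have "feasible L P s (shrink_range L P \<rho> p)"
    using feasible finite_P by (simp add: feasible_iff_reach range_assignment_shrink_range)
  moreover have "cost \<alpha> P (shrink_range L P \<rho> p) < cost \<alpha> P \<rho>"
  proof (rule cost_less_if_less_on[of P "{p}"])
    show "(\<Sum>x\<in>{p}. shrink_range L P \<rho> p x powr \<alpha>) < (\<Sum>x\<in>{p}. \<rho> x powr \<alpha>)"
      using shrink_range_nonneg shrink_range_less finite_P assms alpha_gt_one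
      by (simp add: powr_less_mono2)
  qed (use finite_P assms in auto)
  ultimately show False
    using cost_le_feasible by fastforce
qed

lemma ex_critical_edge:
  assumes "p \<in> P" "0 < \<rho> p"
  obtains f where "f \<in> P" "f \<notin> shrunk_reach p" "p \<in> shrunk_reach p" "circ_dist L p f = \<rho> p"
proof -
  have "\<not> induced_graph L \<rho> P `` shrunk_reach p \<subseteq> shrunk_reach p"
    using feasible_subset_if_closed[OF feasible source_in_reach] shrunk_reach_incomplete[OF assms]
    by blast
  then obtain x f where x: "x \<in> shrunk_reach p" and edge: "(x, f) \<in> induced_graph L \<rho> P"
    and f: "f \<notin> shrunk_reach p"
    by blast
  with reach_closed have "(x, f) \<notin> induced_graph L (shrink_range L P \<rho> p) P" by blast
  with edge have "x = p \<and> circ_dist L p f = \<rho> p"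
    by (rule edge_lost_by_shrink_range[OF finite_P])
  with x edge f that show thesis by (auto simp: induced_graph_def)
qed

lemma source_range_pos:
  assumes "2 \<le> card P"
  shows "0 < \<rho> s"
proof -
  obtain y where "y \<in> P" "y \<noteq> s"
    using assms finite_P source_in_P by (metis card_le_Suc0_iff_eq not_less_eq_eq numeral_2_eq_2)
  then have "(s, y) \<in> (induced_graph L \<rho> P)\<^sup>*" "y \<noteq> s"
    using feasible by (auto simp: feasible_iff_reach reach_def)
  then obtain z where "(s, z) \<in> induced_graph L \<rho> P"
    by (metis converse_rtranclE)
  then have "z \<in> P" "z \<noteq> s" "circ_dist L s z \<le> \<rho> s"
    by (auto simp: induced_graph_def)
  with circ_dist_pos[of s L z] source_in_P P_subset_circle show ?thesis by force
qed

lemma ex_max_shrunk_reach: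
  assumes "2 \<le> card P"
  obtains p where "p \<in> P" "0 < \<rho> p"
    "\<forall>u \<in> P. 0 < \<rho> u \<longrightarrow> card (shrunk_reach u) \<le> card (shrunk_reach p)"
proof -
  have "finite {u \<in> P. 0 < \<rho> u}" "{u \<in> P. 0 < \<rho> u} \<noteq> {}"
    using finite_P source_in_P source_range_pos[OF assms] by auto
  from ex_greatest_image_if_finite[OF this, of "\<lambda>u. card (shrunk_reach u)"] that
  show thesis by auto
qed

context
  fixes p f :: real
  assumes p_in_P: "p \<in> P" and range_p_pos: "0 < \<rho> p"
    and shrunk_reach_max: "\<forall>u \<in> P. 0 < \<rho> u \<longrightarrow> card (shrunk_reach u) \<le> card (shrunk_reach p)"
    and f_in_P: "f \<in> P" and f_unreached: "f \<notin> shrunk_reach p" and p_reached: "p \<in> shrunk_reach p"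
    and dist_p_f: "circ_dist L p f = \<rho> p"
begin

lemma f_ne_p: "f \<noteq> p"
  using dist_p_f range_p_pos circ_dist_self[OF L_pos] by auto

lemma range_zero_if_unreached:
  assumes "u \<in> P" "u \<notin> shrunk_reach p"
  shows "\<rho> u = 0"
proof (rule ccontr)
  assume "\<rho> u \<noteq> 0"
  with assms(1) range_nonneg have range_u_pos: "0 < \<rho> u" by force
  have reach_sub: "shrunk_reach p \<subseteq> shrunk_reach u"
  proof (rule reach_mono, intro ballI)
    fix x assume "x \<in> shrunk_reach p"
    with assms(2) shrunk_reach_subset have "x \<noteq> u" "x \<in> P" by auto
    then show "shrink_range L P \<rho> p x \<le> shrink_range L P \<rho> u x"
      using shrink_range_le[OF finite_P, of \<rho> x] range_nonneg by simp
  qed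
  from p_reached assms(2) have "p \<noteq> u" by auto
  then have "(p, f) \<in> induced_graph L (shrink_range L P \<rho> u) P"
    using p_in_P f_in_P f_ne_p dist_p_f
    by (auto simp: induced_graph_def)
  with reach_sub p_reached have "f \<in> shrunk_reach u"
    using reach_closed by blast
  with reach_sub have "insert f (shrunk_reach p) \<subseteq> shrunk_reach u" by blast
  then have "card (insert f (shrunk_reach p)) \<le> card (shrunk_reach u)"
    using finite_subset[OF shrunk_reach_subset finite_P] by (intro card_mono)
  also have "\<dots> \<le> card (shrunk_reach p)"
    using shrunk_reach_max assms(1) range_u_pos by blast
  finally show False
    using f_unreached finite_subset[OF shrunk_reach_subset finite_P] by simp
qed

lemma range_less_dist_critical:
  assumes "q \<in> P - {p, f}"
  shows "\<rho> q < circ_dist L q f"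
proof (cases "q \<in> shrunk_reach p")
  case True
  show ?thesis
  proof (rule ccontr)
    assume "\<not> \<rho> q < circ_dist L q f"
    with assms f_in_P have "(q, f) \<in> induced_graph L (shrink_range L P \<rho> p) P"
      by (auto simp: induced_graph_def)
    with True f_unreached reach_closed show False by blast
  qed
next
  case False
  with assms have "\<rho> q = 0" by (auto intro: range_zero_if_unreached)
  with assms f_in_P P_subset_circle show ?thesis by (auto intro: circ_dist_pos)
qed

lemma all_but_antipode_reached:
  assumes "circ_dist L p f = L / 2"
  shows "P - {f} \<subseteq> shrunk_reach p"
proof -
  have "P \<subseteq> insert f (shrunk_reach p)"
  proof (rule feasible_subset_if_closed[OF feasible])
    show "induced_graph L \<rho> P `` insert f (shrunk_reach p) \<subseteq> insert f (shrunk_reach p)"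
    proof (intro subsetI, elim ImageE)
      fix y x assume edge: "(x, y) \<in> induced_graph L \<rho> P" and x: "x \<in> insert f (shrunk_reach p)"
      have "x \<noteq> f"
      proof
        assume "x = f"
        with f_unreached f_in_P have "\<rho> x = 0" by (simp add: range_zero_if_unreached)
        with edge P_subset_circle circ_dist_pos[of x L y] show False
          by (auto simp: induced_graph_def)
      qed
      with x have "x \<in> shrunk_reach p" by simp
      show "y \<in> insert f (shrunk_reach p)"
      proof (rule ccontr)
        assume "y \<notin> insert f (shrunk_reach p)"
        with \<open>x \<in> shrunk_reach p\<close> reach_closed
        have "(x, y) \<notin> induced_graph L (shrink_range L P \<rho> p) P" by blast
        with edge have "x = p" "circ_dist L p y = L / 2"
          using edge_lost_by_shrink_range[OF finite_P] assms dist_p_f by auto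
        with assms edge f_in_P P_subset_circle have "y = f"
          by (auto simp: induced_graph_def intro: circ_dist_half_unique)
        with \<open>y \<notin> insert f (shrunk_reach p)\<close> show False by simp
      qed
    qed
  qed simp
  then show ?thesis by blast
qed

lemma feasible_reroute:
  assumes "P - {f} \<subseteq> shrunk_reach p" "q \<in> P - {f}" "\<rho> q \<le> r" "circ_dist L q f \<le> r"
  shows "feasible L P s ((shrink_range L P \<rho> p)(q := r))"
proof -
  let ?\<rho>' = "(shrink_range L P \<rho> p)(q := r)"
  have "0 \<le> r" using assms(2,3) range_nonneg by force
  then have "range_assignment P ?\<rho>'"
    using range_assignment_shrink_range[OF finite_P] feasible
    by (auto simp: feasible_def range_assignment_def)
  moreover have reach_sub: "shrunk_reach p \<subseteq> reach L ?\<rho>' P s"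
    using assms(2,3) shrink_range_le[OF finite_P, where \<rho> = \<rho> and x = q] range_nonneg
    by (intro reach_mono) (auto intro: order_trans)
  moreover have "(q, f) \<in> induced_graph L ?\<rho>' P"
    using assms(2,4) f_in_P by (auto simp: induced_graph_def)
  with assms(1,2) reach_sub have "f \<in> reach L ?\<rho>' P s"
    using reach_closed by blast
  ultimately show ?thesis
    using assms(1) reach_sub by (auto simp: feasible_iff_reach)
qed

lemma critical_range_less_half:
  assumes "2 < card P"
  shows "\<rho> p < L / 2"
proof (rule ccontr)
  assume "\<not> \<rho> p < L / 2"
  with dist_p_f circ_dist_le_half[of L p f]
  have half: "circ_dist L p f = L / 2" and range_p: "\<rho> p = L / 2" by auto
  obtain q where q: "q \<in> P - {f}" and q_max: "\<forall>y \<in> P - {f}. circ_dist L p y \<le> circ_dist L p q"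
    using ex_greatest_image_if_finite[of "P - {f}" "circ_dist L p"] finite_P p_in_P f_ne_p
    by blast
  define D where "D = circ_dist L p q"
  have "\<not> P \<subseteq> {p, f}"
  proof
    assume "P \<subseteq> {p, f}"
    then have "card P \<le> card {p, f}" by (intro card_mono) auto
    also have "\<dots> \<le> 2" by (simp add: card_insert_le_m1)
    finally show False using assms by simp
  qed
  then obtain y where "y \<in> P" "y \<noteq> p" "y \<noteq> f" by blast
  with circ_dist_pos[of p L y] p_in_P P_subset_circle have "0 < circ_dist L p y" by auto
  also have "circ_dist L p y \<le> D"
    using q_max \<open>y \<in> P\<close> \<open>y \<noteq> f\<close> unfolding D_def by blast
  finally have D_pos: "0 < D" .
  with circ_dist_self[OF L_pos] have "q \<noteq> p" unfolding D_def by auto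
  have "D \<noteq> L / 2"
    using circ_dist_half_unique[of p L q f] half q p_in_P f_in_P P_subset_circle
    unfolding D_def by auto
  with circ_dist_le_half have D_less: "D < L / 2" unfolding D_def by (simp add: order_less_le)
  have shrink_le: "shrink_range L P \<rho> p p \<le> D"
    using D_pos q_max half range_p unfolding D_def
    by (intro shrink_range_le_bound[OF finite_P]) auto
  have dist_q_f: "circ_dist L q f = L / 2 - D"
    using circ_dist_to_antipode[of p L f q] half q p_in_P f_in_P P_subset_circle
    unfolding D_def by auto
  define \<rho>' where "\<rho>' = (shrink_range L P \<rho> p)(q := max (\<rho> q) (L / 2 - D))"
  have "feasible L P s \<rho>'"
    unfolding \<rho>'_def using all_but_antipode_reached[OF half] q dist_q_f
    by (intro feasible_reroute) auto
  moreover have "cost \<alpha> P \<rho>' < cost \<alpha> P \<rho>"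
  proof (rule cost_less_if_less_on[of P "{p, q}"])
    have "shrink_range L P \<rho> p p powr \<alpha> \<le> D powr \<alpha>"
      using shrink_le shrink_range_nonneg[OF finite_P] alpha_gt_one by (intro powr_mono2) auto
    moreover have "D powr \<alpha> + max (\<rho> q) (L / 2 - D) powr \<alpha> < \<rho> p powr \<alpha> + \<rho> q powr \<alpha>"
      using powr_add_max_less[OF D_pos D_less range_nonneg[of q] alpha_gt_one] q
      unfolding range_p by simp
    ultimately show "(\<Sum>x\<in>{p, q}. \<rho>' x powr \<alpha>) < (\<Sum>x\<in>{p, q}. \<rho> x powr \<alpha>)"
      using \<open>q \<noteq> p\<close> unfolding \<rho>'_def by simp
  qed (use finite_P p_in_P q in \<open>auto simp: \<rho>'_def\<close>)
  ultimately show False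
    using cost_le_feasible by fastforce
qed

end

end

theorem lemma3:
  fixes L \<alpha> s :: real and P :: "real set" and \<rho> :: "real \<Rightarrow> real"
  assumes "L > 0" and "\<alpha> > 1"
    and "finite P" and "P \<subseteq> circle L" and "s \<in> P" and "card P > 2"
    and "optimal L \<alpha> P s \<rho>"
  shows "\<exists>r \<in> circle L. r \<notin> cov L \<rho> P"
proof -
  interpret optimal_range_assignment L \<alpha> s P \<rho>
    using assms by unfold_locales
  obtain p where p: "p \<in> P" "0 < \<rho> p"
    and max: "\<forall>u \<in> P. 0 < \<rho> u \<longrightarrow> card (shrunk_reach u) \<le> card (shrunk_reach p)"
    using ex_max_shrunk_reach assms(6) by auto
  obtain f where f: "f \<in> P" "f \<notin> shrunk_reach p" "p \<in> shrunk_reach p" "circ_dist L p f = \<rho> p"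
    using ex_critical_edge[OF p] .
  note critical = p max f
  show ?thesis
  proof (rule ex_not_in_cov_beyond)
    show "\<rho> f = 0" using range_zero_if_unreached[OF critical f(1,2)] .
    show "\<rho> p < L / 2" using critical_range_less_half[OF critical assms(6)] .
    show "\<forall>q \<in> P - {p, f}. \<rho> q < circ_dist L q f"
      using range_less_dist_critical[OF critical] by blast
  qed (use assms p f in auto)
qed

end
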